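(* Let $$g_t(x) = x^3 + 147(t^2 + 13t + 49)x^2 + 147(t^2 + 13t + 49)(33t^2 + 637t + 2401)x + 49(t^2 + 13t + 49)(881t^4 + 38122t^3 + 525819t^2 + 3058874t + 5764801)\in\mathbb{Q}(t)[x].$$ Then $g_t$ parametrizes all cyclic cubic extensions of $\mathbb{Q}$: for every Galois extension $L/\mathbb{Q}$ with $\mathrm{Gal}(L/\mathbb{Q})\cong\mathbb{Z}/3\mathbb{Z}$ there exists $t\in\mathbb{Q}$ such that $L$ is the splitting field of $g_t(x)$ over $\mathbb{Q}$.
   Context: $g_t(x)$ is (up to defining the same field) the cubic factor of the $7$-division polynomial of the family $\mathcal{E}_t\colon y^2 = x^3 - 27(t^2+13t+49)^3(t^2+245t+2401)x + 54(t^2+13t+49)^4(t^4-490t^3-21609t^2-235298t-823543)$ of elliptic curves with a rational $7$-isogeny; it defines the field of $x$-coordinates of a generator of the kernel of that isogeny. *)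

theory Defs
  imports "HOL-Algebra.Elementary_Groups" "HOL-Computational_Algebra.Polynomial"
begin

text \<open>Number fields are modelled as subfields of the complex numbers.\<close>

definition subfield_C :: "complex set \<Rightarrow> bool" where
  "subfield_C L \<longleftrightarrow> 0 \<in> L \<and> 1 \<in> L \<and>
     (\<forall>x\<in>L. \<forall>y\<in>L. x + y \<in> L \<and> x * y \<in> L) \<and>
     (\<forall>x\<in>L. - x \<in> L \<and> inverse x \<in> L)"

definition Q_dim :: "complex set \<Rightarrow> nat \<Rightarrow> bool" where
  "Q_dim L n \<longleftrightarrow> (\<exists>b :: nat \<Rightarrow> complex. (\<forall>i<n. b i \<in> L) \<and>
     (\<forall>x\<in>L. \<exists>c. (\<forall>i<n. c i \<in> \<rat>) \<and> x = (\<Sum>i<n. c i * b i)) \<and>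
     (\<forall>c. (\<forall>i<n. c i \<in> \<rat>) \<and> (\<Sum>i<n. c i * b i) = 0 \<longrightarrow> (\<forall>i<n. c i = 0)))"

text \<open>Field automorphisms of L (automatically Q-linear), as extensional maps.\<close>
definition Aut_C :: "complex set \<Rightarrow> (complex \<Rightarrow> complex) set" where
  "Aut_C L = {\<sigma>. bij_betw \<sigma> L L \<and> (\<forall>x\<in>L. \<forall>y\<in>L. \<sigma> (x + y) = \<sigma> x + \<sigma> y \<and>
       \<sigma> (x * y) = \<sigma> x * \<sigma> y) \<and> \<sigma> 1 = 1 \<and> (\<forall>x. x \<notin> L \<longrightarrow> \<sigma> x = x)}"

definition Gal_C :: "complex set \<Rightarrow> (complex \<Rightarrow> complex) monoid" where
  "Gal_C L = \<lparr>carrier = Aut_C L, monoid.mult = (\<lambda>\<sigma> \<tau>. \<sigma> \<circ> \<tau>), one = id\<rparr>"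

definition galois_over_Q :: "complex set \<Rightarrow> bool" where
  "galois_over_Q L \<longleftrightarrow> subfield_C L \<and> (\<exists>n. Q_dim L n \<and> card (Aut_C L) = n)"

definition splitting_field_Q :: "rat poly \<Rightarrow> complex set" where
  "splitting_field_Q p = \<Inter>{K. subfield_C K \<and> {z. poly (map_poly of_rat p) z = 0} \<subseteq> K}"

definition g_poly :: "rat \<Rightarrow> rat poly" where
  "g_poly t = (let s = t^2 + 13*t + 49 in
     [: 49 * s * (881*t^4 + 38122*t^3 + 525819*t^2 + 3058874*t + 5764801),
        147 * s * (33*t^2 + 637*t + 2401),
        147 * s,
        1 :])"

end

theory Submission
  imports Defs
begin

(*
  Let \<sigma> generate Gal(L/Q). Subtracting a third of its trace from an element moved by \<sigma> gives
  \<theta> \<in> L with \<sigma> \<theta> \<noteq> \<theta> and trace 0, so \<theta>, \<sigma> \<theta>, \<sigma>^2 \<theta> are the roots of x^3 + p x + q with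
  p, q rational and discriminant the square of the rational d = (\<theta> - \<sigma> \<theta>)(\<sigma> \<theta> - \<sigma>^2 \<theta>)(\<sigma>^2 \<theta> - \<theta>).
  Put u = -3q/p, choose v = \<plusminus>d/(9p) with u \<noteq> 13v, \<lambda> = 14/(u - 13v) and t = 7\<lambda>v; then a
  polynomial identity shows that r = 28t\<lambda>\<theta> - 49(t^2 + 13t + 49) is a root of g_t.
  Since the fixed field of \<sigma> is Q and [L:Q] = 3, an element moved by \<sigma> satisfies no rational
  quadratic and therefore generates L; and the three distinct conjugates of r exhaust the
  roots of g_t.
*)

lemma subfield_C_closed:
  assumes "subfield_C K"
  shows "0 \<in> K" "1 \<in> K" "x \<in> K \<Longrightarrow> y \<in> K \<Longrightarrow> x + y \<in> K"
    "x \<in> K \<Longrightarrow> y \<in> K \<Longrightarrow> x * y \<in> K" "x \<in> K \<Longrightarrow> - x \<in> K"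
    "x \<in> K \<Longrightarrow> inverse x \<in> K"
  using assms unfolding subfield_C_def by auto

lemma subfield_C_diff: "subfield_C K \<Longrightarrow> x \<in> K \<Longrightarrow> y \<in> K \<Longrightarrow> x - y \<in> K"
  unfolding subfield_C_def by (metis diff_conv_add_uminus)

lemma subfield_C_divide: "subfield_C K \<Longrightarrow> x \<in> K \<Longrightarrow> y \<in> K \<Longrightarrow> x / y \<in> K"
  unfolding subfield_C_def by (metis divide_inverse)

lemma subfield_C_power: "subfield_C K \<Longrightarrow> x \<in> K \<Longrightarrow> x ^ n \<in> K"
  by (induction n) (simp_all add: subfield_C_def)

lemma subfield_C_of_nat: "subfield_C K \<Longrightarrow> of_nat n \<in> K"
  by (induction n) (simp_all add: subfield_C_def)

lemma subfield_C_numeral: "subfield_C K \<Longrightarrow> numeral n \<in> K"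
  using subfield_C_of_nat[of K "numeral n"] by simp

lemma subfield_C_of_int: "subfield_C K \<Longrightarrow> of_int n \<in> K"
  by (cases n rule: int_cases) (simp_all add: subfield_C_of_nat subfield_C_def del: of_nat_Suc)

lemma subfield_C_of_rat: "subfield_C K \<Longrightarrow> of_rat q \<in> K"
  by (cases q) (simp add: of_rat_rat subfield_C_divide subfield_C_of_int)

interpretation Q_vs: vector_space "\<lambda>(r::rat) (z::complex). of_rat r * z"
  by unfold_locales (simp_all add: algebra_simps of_rat_add of_rat_mult)

lemma Q_dim_span:
  assumes "Q_dim L n"
  obtains B where "finite B" "card B \<le> n" "L \<subseteq> Q_vs.span B"
proof -
  obtain b where b: "\<forall>x\<in>L. \<exists>c. (\<forall>i<n. c i \<in> \<rat>) \<and> x = (\<Sum>i<n. c i * b i)"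
    using assms unfolding Q_dim_def by blast
  have "L \<subseteq> Q_vs.span (b ` {..<n})"
  proof
    fix x assume "x \<in> L"
    then obtain c where c: "\<forall>i<n. c i \<in> \<rat>" "x = (\<Sum>i<n. c i * b i)" using b by blast
    have "c i * b i \<in> Q_vs.span (b ` {..<n})" if i: "i < n" for i
    proof -
      obtain r where "c i = of_rat r" using c(1) i Rats_cases by meson
      then show ?thesis using i by (simp add: Q_vs.span_base Q_vs.span_scale)
    qed
    then show "x \<in> Q_vs.span (b ` {..<n})" unfolding c(2) by (intro Q_vs.span_sum) auto
  qed
  with card_image_le[of "{..<n}" b] show ?thesis by (intro that) simp_all
qed

lemma Q_dim_dependent_list:
  assumes "Q_dim L n" "set xs \<subseteq> L" "n < length xs"
  obtains c :: "nat \<Rightarrow> rat"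
  where "\<exists>i<length xs. c i \<noteq> 0" "(\<Sum>i<length xs. of_rat (c i) * xs ! i) = 0"
proof (cases "distinct xs")
  case True
  obtain B where B: "finite B" "card B \<le> n" "L \<subseteq> Q_vs.span B" using Q_dim_span[OF assms(1)] .
  have "Q_vs.dependent (set xs)"
    using Q_vs.independent_span_bound[OF B(1), of "set xs"] B assms(2,3) True
    by (auto simp: distinct_card)
  then obtain u where u: "\<exists>v\<in>set xs. u v \<noteq> 0" "(\<Sum>v\<in>set xs. of_rat (u v) * v) = 0"
    by (auto simp: Q_vs.dependent_finite)
  show ?thesis
  proof
    show "\<exists>i<length xs. u (xs ! i) \<noteq> 0" using u(1) by (auto simp: in_set_conv_nth)
    show "(\<Sum>i<length xs. of_rat (u (xs ! i)) * xs ! i) = 0"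
      using u(2) True by (simp add: sum.distinct_set_conv_list sum_list_sum_nth atLeast0LessThan)
  qed
next
  case False
  then obtain i j where ij: "i < length xs" "j < length xs" "i \<noteq> j" "xs ! i = xs ! j"
    by (auto simp: distinct_conv_nth)
  define c :: "nat \<Rightarrow> rat" where "c k = of_bool (k = i) - of_bool (k = j)" for k
  have "(\<Sum>k<length xs. of_rat (c k) * xs ! k)
      = (\<Sum>k<length xs. if k = i then xs ! k else 0) - (\<Sum>k<length xs. if k = j then xs ! k else 0)"
    unfolding sum_subtractf[symmetric] by (rule sum.cong) (auto simp: c_def of_rat_diff)
  also have "\<dots> = 0" using ij by simp
  finally show ?thesis using ij by (intro that[of c]) (auto simp: c_def)
qed

lemma Q_dim_3_dependent4:
  assumes "Q_dim L 3" "a \<in> L" "b \<in> L" "c \<in> L" "d \<in> L"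
  obtains q0 q1 q2 q3 :: rat where "q0 \<noteq> 0 \<or> q1 \<noteq> 0 \<or> q2 \<noteq> 0 \<or> q3 \<noteq> 0"
    "of_rat q0 * a + of_rat q1 * b + of_rat q2 * c + of_rat q3 * d = 0"
proof -
  obtain q :: "nat \<Rightarrow> rat" where "\<exists>i<length [a, b, c, d]. q i \<noteq> 0"
    "(\<Sum>i<length [a, b, c, d]. of_rat (q i) * [a, b, c, d] ! i) = 0"
    by (rule Q_dim_dependent_list[OF assms(1), of "[a, b, c, d]"]) (use assms in auto)
  then show ?thesis
    by (intro that[of "q 0" "q 1" "q 2" "q 3"]) (auto simp: numeral_eq_Suc less_Suc_eq add.assoc)
qed

lemma map_poly_of_rat_eq_0_iff [simp]: "map_poly (of_rat :: rat \<Rightarrow> 'a::field_char_0) f = 0 \<longleftrightarrow> f = 0"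
  by (simp add: map_poly_eq_0_iff)

lemma degree_map_poly_of_rat [simp]: "degree (map_poly (of_rat :: rat \<Rightarrow> 'a::field_char_0) f) = degree f"
  by (simp add: degree_map_poly)

abbreviation roots_C :: "rat poly \<Rightarrow> complex set" where
  "roots_C f \<equiv> {z. poly (map_poly of_rat f) z = 0}"

definition g_cubic :: "'a::field_char_0 \<Rightarrow> 'a \<Rightarrow> 'a" where
  "g_cubic t z = (let s = t^2 + 13*t + 49 in
     z^3 + 147*s*z^2 + 147*s*(33*t^2 + 637*t + 2401)*z
     + 49*s*(881*t^4 + 38122*t^3 + 525819*t^2 + 3058874*t + 5764801))"

lemma poly_g_poly: "poly (map_poly of_rat (g_poly t)) z = g_cubic (of_rat t) z"
  by (simp add: g_poly_def g_cubic_def Let_def map_poly_pCons of_rat_add of_rat_mult of_rat_power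
      algebra_simps power2_eq_square power3_eq_cube)

lemma degree_g_poly: "degree (g_poly t) = 3"
  by (simp add: g_poly_def Let_def)

lemma square_add_self_add_one_neq_0: "(w :: 'a::linordered_field)^2 + w + 1 \<noteq> 0"
proof -
  have "w^2 + w + 1 = (w + 1/2)^2 + 3/4" by (simp add: power2_eq_square field_simps)
  also have "\<dots> > 0" by (simp add: add_nonneg_pos)
  finally show ?thesis by simp
qed

lemma irrational_linear_eq_0:
  fixes x :: "'a::field_char_0"
  assumes "x \<notin> \<rat>" "of_rat a + of_rat b * x = 0"
  shows "a = 0 \<and> b = 0"
proof -
  have "b = 0"
  proof (rule ccontr)
    assume "b \<noteq> 0"
    then have "x = of_rat (- a / b)"
      using assms(2) by (simp add: of_rat_divide of_rat_minus field_simps add_eq_0_iff)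
    then show False using assms(1) by simp
  qed
  then show ?thesis using assms(2) by simp
qed

lemma g_cubic_vanishes:
  fixes \<theta> P Q V \<Lambda> :: "'a::field_char_0"
  assumes cubic: "\<theta>^3 + P*\<theta> + Q = 0" and "P \<noteq> 0"
    and disc: "81*P^2*V^2 = -4*P^3 - 27*Q^2" and \<Lambda>: "\<Lambda>*(-3*Q/P - 13*V) = 14"
  defines "T \<equiv> 7*\<Lambda>*V"
  defines "S \<equiv> T^2 + 13*T + 49"
  shows "g_cubic T (28*T*\<Lambda>*\<theta> - 49*S) = 0"
proof -
  define U where "U = -3*Q/P"
  define W where "W = \<Lambda>*\<theta>"
  have Q: "Q = -(U*P)/3" using \<open>P \<noteq> 0\<close> by (simp add: U_def)
  have \<Lambda>U: "\<Lambda>*U = (13*T + 98)/7" using \<Lambda> by (simp add: U_def T_def algebra_simps)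
  have "P^2*(81*V^2 + 4*P + 3*U^2) = 0"
    using disc unfolding Q by (simp add: algebra_simps power2_eq_square power3_eq_cube)
  then have "81*V^2 + 4*P + 3*U^2 = 0" using \<open>P \<noteq> 0\<close> by simp
  moreover have "4*P = (81*V^2 + 4*P + 3*U^2) - (81*V^2 + 3*U^2)" by simp
  ultimately have P4: "4*P = -(81*V^2 + 3*U^2)" by simp
  have "\<Lambda>^2*(-P/3) = \<Lambda>^2*(-(4*P))/12" by simp
  also have "\<dots> = (27*(\<Lambda>*V)^2 + (\<Lambda>*U)^2)/4" unfolding P4 by (simp add: field_simps power2_eq_square)
  also have "\<dots> = S" unfolding \<Lambda>U by (simp add: S_def T_def field_simps power2_eq_square)
  finally have S: "S = \<Lambda>^2*(-P/3)" by simp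
  have "g_cubic T (28*T*\<Lambda>*\<theta> - 49*S) = 21952*T^3*(W^3 - 3*S*W + S*(\<Lambda>*U))"
    unfolding \<Lambda>U g_cubic_def S_def W_def Let_def by (simp add: field_simps) algebra
  moreover have "W^3 - 3*S*W + S*(\<Lambda>*U) = \<Lambda>^3*(\<theta>^3 + P*\<theta> + Q)"
    unfolding S W_def Q using \<open>P \<noteq> 0\<close> by (simp add: field_simps power2_eq_square power3_eq_cube)
  ultimately show ?thesis using cubic by simp
qed

lemma choose_nondegenerate_sqrt:
  fixes p q d :: "'a::field_char_0"
  assumes "p \<noteq> 0" "d \<noteq> 0"
  obtains v where "v \<noteq> 0" "81*p^2*v^2 = d^2" "-3*q/p - 13*v \<noteq> 0"
proof -
  define v where "v = d/(9*p)"
  have "v \<noteq> 0" "81*p^2*v^2 = d^2" "81*p^2*(-v)^2 = d^2"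
    using assms by (simp_all add: v_def field_simps power2_eq_square)
  moreover have "-3*q/p - 13*v \<noteq> 0 \<or> -3*q/p - 13*(-v) \<noteq> 0" using \<open>v \<noteq> 0\<close> by auto
  ultimately show ?thesis using that[of v] that[of "-v"] by auto
qed

lemma Aut_C_comp: "\<sigma> \<in> Aut_C L \<Longrightarrow> \<tau> \<in> Aut_C L \<Longrightarrow> \<sigma> \<circ> \<tau> \<in> Aut_C L"
  unfolding Aut_C_def by (auto intro: bij_betw_trans simp: bij_betw_apply)

lemma Gal_C_iso_Z3_generator:
  assumes "Gal_C L \<cong> integer_mod_group 3"
  obtains \<sigma> where "card (Aut_C L) = 3" "\<sigma> \<in> Aut_C L" "\<sigma> \<noteq> id" "\<sigma> \<circ> \<sigma> \<circ> \<sigma> = id"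
proof -
  obtain h where h: "h \<in> iso (Gal_C L) (integer_mod_group 3)" using assms unfolding is_iso_def by blast
  have bij: "bij_betw h (Aut_C L) {0..<3}"
    using h by (simp add: iso_def Gal_C_def carrier_integer_mod_group)
  have h_comp: "h (\<sigma> \<circ> \<tau>) = (h \<sigma> + h \<tau>) mod 3" if "\<sigma> \<in> Aut_C L" "\<tau> \<in> Aut_C L" for \<sigma> \<tau>
    using hom_mult[of h "Gal_C L" "integer_mod_group 3" \<sigma> \<tau>] h that by (simp add: iso_def Gal_C_def)
  have id_in: "id \<in> Aut_C L" by (simp add: Aut_C_def bij_betw_id)
  have "h id = (h id + h id) mod 3" using h_comp[OF id_in id_in] by simp
  moreover have "h id \<in> {0..<3}" using bij_betw_apply[OF bij id_in] .
  ultimately have h_id: "h id = 0" by simp presburger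
  have "1 \<in> h ` Aut_C L" using bij_betw_imp_surj_on[OF bij] by simp
  then obtain \<sigma> where \<sigma>: "\<sigma> \<in> Aut_C L" "h \<sigma> = 1" by (metis imageE)
  have \<sigma>\<sigma>: "\<sigma> \<circ> \<sigma> \<in> Aut_C L" using Aut_C_comp[OF \<sigma>(1) \<sigma>(1)] .
  have "h (\<sigma> \<circ> \<sigma> \<circ> \<sigma>) = h id" using h_comp[OF \<sigma>\<sigma> \<sigma>(1)] h_comp[OF \<sigma>(1) \<sigma>(1)] \<sigma>(2) h_id by simp
  then have "\<sigma> \<circ> \<sigma> \<circ> \<sigma> = id"
    using bij_betw_imp_inj_on[OF bij] Aut_C_comp[OF \<sigma>\<sigma> \<sigma>(1)] id_in by (auto dest: inj_onD)
  moreover have "card (Aut_C L) = 3" using bij_betw_same_card[OF bij] by simp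
  ultimately show ?thesis using \<sigma> h_id by (intro that) auto
qed

locale subfield_aut =
  fixes L :: "complex set" and \<sigma> :: "complex \<Rightarrow> complex"
  assumes subfield: "subfield_C L" and aut: "\<sigma> \<in> Aut_C L"
begin

lemmas L_closed = subfield_C_closed[OF subfield] subfield_C_diff[OF subfield]
  subfield_C_divide[OF subfield] subfield_C_power[OF subfield] subfield_C_of_nat[OF subfield]
  subfield_C_numeral[OF subfield] subfield_C_of_int[OF subfield] subfield_C_of_rat[OF subfield]

lemma aut_bij: "bij_betw \<sigma> L L"
  and aut_add: "x \<in> L \<Longrightarrow> y \<in> L \<Longrightarrow> \<sigma> (x + y) = \<sigma> x + \<sigma> y"
  and aut_mult: "x \<in> L \<Longrightarrow> y \<in> L \<Longrightarrow> \<sigma> (x * y) = \<sigma> x * \<sigma> y"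
  and aut_one: "\<sigma> 1 = 1"
  and aut_outside: "x \<notin> L \<Longrightarrow> \<sigma> x = x"
  using aut by (auto simp: Aut_C_def)

lemma aut_in: "x \<in> L \<Longrightarrow> \<sigma> x \<in> L"
  using aut_bij by (rule bij_betw_apply)

lemma aut_inj: "x \<in> L \<Longrightarrow> y \<in> L \<Longrightarrow> \<sigma> x = \<sigma> y \<Longrightarrow> x = y"
  using aut_bij by (auto simp: bij_betw_def dest: inj_onD)

lemma aut_zero: "\<sigma> 0 = 0"
  using aut_add[of 0 0] by (simp add: L_closed)

lemma aut_minus: "x \<in> L \<Longrightarrow> \<sigma> (- x) = - \<sigma> x"
  using aut_add[of x "- x"] by (simp add: L_closed aut_zero add.commute eq_neg_iff_add_eq_0)

lemma aut_diff: "x \<in> L \<Longrightarrow> y \<in> L \<Longrightarrow> \<sigma> (x - y) = \<sigma> x - \<sigma> y"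
  using aut_add[of x "- y"] aut_minus[of y] by (simp add: L_closed)

lemma aut_inverse: "x \<in> L \<Longrightarrow> \<sigma> (inverse x) = inverse (\<sigma> x)"
  using aut_mult[of x "inverse x"]
  by (cases "x = 0") (auto simp: L_closed aut_zero aut_one inverse_unique)

lemma aut_divide: "x \<in> L \<Longrightarrow> y \<in> L \<Longrightarrow> \<sigma> (x / y) = \<sigma> x / \<sigma> y"
  using aut_mult[of x "inverse y"] aut_inverse[of y] by (simp add: L_closed divide_inverse)

lemma aut_of_nat: "\<sigma> (of_nat n) = of_nat n"
  by (induction n) (simp_all add: aut_zero aut_one aut_add L_closed)

lemma aut_numeral: "\<sigma> (numeral n) = numeral n"
  using aut_of_nat[of "numeral n"] by simp

lemma aut_of_int: "\<sigma> (of_int n) = of_int n"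
  by (cases n rule: int_cases)
    (simp_all add: aut_of_nat aut_minus L_closed del: of_nat_Suc)

lemma aut_of_rat: "\<sigma> (of_rat q) = of_rat q"
  by (cases q) (simp add: of_rat_rat aut_divide aut_of_int L_closed)

lemma poly_of_rat_in: "x \<in> L \<Longrightarrow> poly (map_poly of_rat f) x \<in> L"
  by (induction f) (simp_all add: map_poly_pCons L_closed)

lemma aut_poly_of_rat: "x \<in> L \<Longrightarrow> \<sigma> (poly (map_poly of_rat f) x) = poly (map_poly of_rat f) (\<sigma> x)"
  by (induction f)
    (simp_all add: map_poly_pCons aut_zero aut_add aut_mult aut_of_rat poly_of_rat_in L_closed)

end

locale cyclic_cubic = subfield_aut +
  assumes Q_dim: "Q_dim L 3" and nontrivial: "\<sigma> \<noteq> id" and order_3: "\<sigma> \<circ> \<sigma> \<circ> \<sigma> = id"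
begin

lemma aut_aut_aut: "\<sigma> (\<sigma> (\<sigma> x)) = x"
  using fun_cong[OF order_3, of x] by simp

lemma moved_element: obtains y where "y \<in> L" "\<sigma> y \<noteq> y"
  using nontrivial aut_outside by (metis eq_id_iff)

lemma moved_orbit_distinct:
  assumes "y \<in> L" "\<sigma> y \<noteq> y"
  shows "\<sigma> (\<sigma> y) \<noteq> \<sigma> y" "\<sigma> (\<sigma> y) \<noteq> y"
proof -
  show "\<sigma> (\<sigma> y) \<noteq> \<sigma> y" using aut_inj[OF aut_in[OF assms(1)] assms(1)] assms(2) by blast
  show "\<sigma> (\<sigma> y) \<noteq> y"
  proof
    assume "\<sigma> (\<sigma> y) = y"
    then have "\<sigma> y = \<sigma> (\<sigma> (\<sigma> y))" by simp
    then show False using assms(2) by (simp add: aut_aut_aut)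
  qed
qed

text \<open>An irrational fixed element x would make 1, x, y, x y independent for any moved y.\<close>
lemma fixed_imp_Rats:
  assumes x: "x \<in> L" and fixed: "\<sigma> x = x"
  shows "x \<in> \<rat>"
proof (rule ccontr)
  assume irr: "x \<notin> \<rat>"
  obtain y where y: "y \<in> L" "\<sigma> y \<noteq> y" by (rule moved_element)
  obtain q0 q1 q2 q3 where nz: "q0 \<noteq> 0 \<or> q1 \<noteq> 0 \<or> q2 \<noteq> 0 \<or> q3 \<noteq> 0"
    and rel: "of_rat q0 * 1 + of_rat q1 * x + of_rat q2 * y + of_rat q3 * (x * y) = 0"
    by (rule Q_dim_3_dependent4[OF Q_dim L_closed(2) x y(1) L_closed(4)[OF x y(1)]])
  define a where "a = of_rat q0 + of_rat q1 * x"
  define b where "b = of_rat q2 + of_rat q3 * x"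
  have "a + b * y = 0" using rel by (simp add: a_def b_def algebra_simps)
  moreover have "\<sigma> (a + b * y) = a + b * \<sigma> y"
    using x y fixed by (simp add: a_def b_def aut_add aut_mult aut_of_rat L_closed)
  ultimately have "a + b * \<sigma> y = 0" by (simp add: aut_zero)
  have "b * (y - \<sigma> y) = (a + b * y) - (a + b * \<sigma> y)" by (simp add: algebra_simps)
  also have "\<dots> = 0" by (simp only: \<open>a + b * y = 0\<close> \<open>a + b * \<sigma> y = 0\<close> diff_self)
  finally have "b * (y - \<sigma> y) = 0" .
  then have "b = 0" using y(2) by simp
  then have "q2 = 0 \<and> q3 = 0" using irrational_linear_eq_0[OF irr] by (simp add: b_def)
  moreover from this have "q0 = 0 \<and> q1 = 0"
    using irrational_linear_eq_0[OF irr] \<open>a + b * y = 0\<close> \<open>b = 0\<close> by (simp add: a_def)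
  ultimately show False using nz by simp
qed

lemma orbit_subset_roots:
  assumes "r \<in> L" "poly (map_poly of_rat f) r = 0"
  shows "{r, \<sigma> r, \<sigma> (\<sigma> r)} \<subseteq> roots_C f"
  using assms aut_poly_of_rat[of r f] aut_poly_of_rat[of "\<sigma> r" f] aut_in[of r] by (simp add: aut_zero)

lemma card_moved_orbit: "r \<in> L \<Longrightarrow> \<sigma> r \<noteq> r \<Longrightarrow> card {r, \<sigma> r, \<sigma> (\<sigma> r)} = 3"
  using moved_orbit_distinct[of r] by auto

lemma degree_ge_3_if_moved_root:
  assumes "f \<noteq> 0" "r \<in> L" "\<sigma> r \<noteq> r" "poly (map_poly of_rat f) r = 0"
  shows "3 \<le> degree f"
proof -
  have nz: "map_poly (of_rat :: rat \<Rightarrow> complex) f \<noteq> 0" using assms(1) by simp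
  have "3 = card {r, \<sigma> r, \<sigma> (\<sigma> r)}" using card_moved_orbit assms(2,3) by simp
  also have "\<dots> \<le> card (roots_C f)"
    using orbit_subset_roots[OF assms(2,4)] poly_roots_finite[OF nz] by (rule card_mono[rotated])
  also have "\<dots> \<le> degree f" using card_poly_roots_bound[OF nz] by simp
  finally show ?thesis .
qed

lemma roots_eq_moved_orbit:
  assumes "degree f = 3" "r \<in> L" "\<sigma> r \<noteq> r" "poly (map_poly of_rat f) r = 0"
  shows "roots_C f = {r, \<sigma> r, \<sigma> (\<sigma> r)}"
proof -
  have nz: "map_poly (of_rat :: rat \<Rightarrow> complex) f \<noteq> 0" using assms(1) by auto
  have "card (roots_C f) \<le> card {r, \<sigma> r, \<sigma> (\<sigma> r)}"
    using card_poly_roots_bound[OF nz] card_moved_orbit[OF assms(2,3)] assms(1)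
    by simp
  then show ?thesis
    using orbit_subset_roots[OF assms(2,4)] poly_roots_finite[OF nz] by (intro card_seteq[symmetric]) auto
qed

text \<open>In a rational relation among 1, r, r^2, z the coefficient of z cannot vanish, since r
  satisfies no rational quadratic.\<close>
lemma moved_element_generates:
  assumes K: "subfield_C K" and r: "r \<in> L" "r \<in> K" "\<sigma> r \<noteq> r"
  shows "L \<subseteq> K"
proof
  fix z assume z: "z \<in> L"
  obtain q0 q1 q2 q3 where nz: "q0 \<noteq> 0 \<or> q1 \<noteq> 0 \<or> q2 \<noteq> 0 \<or> q3 \<noteq> 0"
    and rel: "of_rat q0 * 1 + of_rat q1 * r + of_rat q2 * r^2 + of_rat q3 * z = 0"
    by (rule Q_dim_3_dependent4[OF Q_dim L_closed(2) r(1) subfield_C_power[OF subfield r(1)] z])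
  have "q3 \<noteq> 0"
  proof
    assume "q3 = 0"
    then have root: "poly (map_poly of_rat [:q0, q1, q2:]) r = 0"
      using rel by (simp add: map_poly_pCons algebra_simps power2_eq_square)
    have "[:q0, q1, q2:] = 0"
    proof (rule ccontr)
      assume "[:q0, q1, q2:] \<noteq> 0"
      from degree_ge_3_if_moved_root[OF this r(1,3) root] show False
        using degree_pCons_le[of q1 "[:q2:]"] by (simp split: if_splits)
    qed
    then show False using nz \<open>q3 = 0\<close> by simp
  qed
  then have "z = (- of_rat q0 - of_rat q1 * r - of_rat q2 * r^2) / of_rat q3"
    using rel by (simp add: field_simps add_eq_0_iff)
  also have "\<dots> \<in> K"
    by (intro subfield_C_divide subfield_C_diff subfield_C_closed(4,5) subfield_C_power
        subfield_C_of_rat K r(2))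
  finally show "z \<in> K" .
qed

lemma splitting_field_eq_if_moved_root:
  assumes "degree f = 3" "r \<in> L" "\<sigma> r \<noteq> r" "poly (map_poly of_rat f) r = 0"
  shows "L = splitting_field_Q f"
  unfolding splitting_field_Q_def
proof
  have roots: "roots_C f \<subseteq> L"
    using roots_eq_moved_orbit[OF assms] assms(2) aut_in by auto
  then show "\<Inter>{K. subfield_C K \<and> roots_C f \<subseteq> K} \<subseteq> L"
    using subfield by blast
  show "L \<subseteq> \<Inter>{K. subfield_C K \<and> roots_C f \<subseteq> K}"
    using moved_element_generates[OF _ assms(2) _ assms(3)] assms(4) by blast
qed

lemma fixed_obtain_rat:
  assumes "x \<in> L" "\<sigma> x = x"
  obtains q where "x = of_rat q"
  using fixed_imp_Rats[OF assms] by (auto elim: Rats_cases)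

lemma trace_zero_moved_element:
  obtains \<theta> where "\<theta> \<in> L" "\<sigma> \<theta> \<noteq> \<theta>" "\<theta> + \<sigma> \<theta> + \<sigma> (\<sigma> \<theta>) = 0"
proof -
  obtain y where y: "y \<in> L" "\<sigma> y \<noteq> y" by (rule moved_element)
  define m where "m = (y + \<sigma> y + \<sigma> (\<sigma> y)) / 3"
  have m: "m \<in> L" unfolding m_def using y(1) by (simp add: aut_in L_closed)
  have "\<sigma> m = m"
    unfolding m_def using y(1) by (simp add: aut_in aut_add aut_divide aut_numeral aut_aut_aut L_closed algebra_simps)
  moreover have "y + \<sigma> y + \<sigma> (\<sigma> y) = 3 * m" by (simp add: m_def)
  ultimately show ?thesis
    using y m by (intro that[of "y - m"]) (auto simp: aut_diff aut_in L_closed add.assoc)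
qed

text \<open>If the second symmetric function vanished, the ratio of two conjugates would be a
  rational root of x^2 + x + 1.\<close>
lemma trace_zero_pair_sum_neq_0:
  assumes \<theta>: "\<theta> \<in> L" "\<sigma> \<theta> \<noteq> \<theta>" "\<theta> + \<sigma> \<theta> + \<sigma> (\<sigma> \<theta>) = 0"
  shows "\<theta> * \<sigma> \<theta> + \<sigma> \<theta> * \<sigma> (\<sigma> \<theta>) + \<sigma> (\<sigma> \<theta>) * \<theta> \<noteq> 0"
proof
  assume P0: "\<theta> * \<sigma> \<theta> + \<sigma> \<theta> * \<sigma> (\<sigma> \<theta>) + \<sigma> (\<sigma> \<theta>) * \<theta> = 0"
  have \<theta>3: "\<sigma> (\<sigma> \<theta>) = - \<theta> - \<sigma> \<theta>" using \<theta>(3) by (simp add: algebra_simps add_eq_0_iff)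
  have "\<theta>^2 + \<theta> * \<sigma> \<theta> + (\<sigma> \<theta>)^2
      = - (\<theta> * \<sigma> \<theta> + \<sigma> \<theta> * \<sigma> (\<sigma> \<theta>) + \<sigma> (\<sigma> \<theta>) * \<theta>)"
    unfolding \<theta>3 by (simp add: algebra_simps power2_eq_square)
  with P0 have E: "\<theta>^2 + \<theta> * \<sigma> \<theta> + (\<sigma> \<theta>)^2 = 0" by simp
  have "\<theta> \<noteq> 0" using \<theta>(2) aut_zero by auto
  have "\<sigma> \<theta> \<noteq> 0" using aut_inj[OF \<theta>(1), of 0] \<open>\<theta> \<noteq> 0\<close> aut_zero L_closed by auto
  have "(\<sigma> \<theta> / \<theta>)^2 + \<sigma> \<theta> / \<theta> + 1 = (\<theta>^2 + \<theta> * \<sigma> \<theta> + (\<sigma> \<theta>)^2) / \<theta>^2"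
    using \<open>\<theta> \<noteq> 0\<close> by (simp add: field_simps power2_eq_square)
  with E have z_root: "(\<sigma> \<theta> / \<theta>)^2 + \<sigma> \<theta> / \<theta> + 1 = 0" by simp
  have "\<sigma> (\<sigma> \<theta>) * \<theta> - \<sigma> \<theta> * \<sigma> \<theta> = - (\<theta>^2 + \<theta> * \<sigma> \<theta> + (\<sigma> \<theta>)^2)"
    unfolding \<theta>3 by (simp add: algebra_simps power2_eq_square)
  with E have "\<sigma> (\<sigma> \<theta>) * \<theta> = \<sigma> \<theta> * \<sigma> \<theta>" by simp
  with \<open>\<theta> \<noteq> 0\<close> \<open>\<sigma> \<theta> \<noteq> 0\<close> have z_fixed: "\<sigma> (\<sigma> \<theta>) / \<sigma> \<theta> = \<sigma> \<theta> / \<theta>"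
    by (simp add: frac_eq_eq)
  have "\<sigma> \<theta> / \<theta> \<in> L" using \<theta>(1) by (simp add: aut_in L_closed)
  moreover have "\<sigma> (\<sigma> \<theta> / \<theta>) = \<sigma> \<theta> / \<theta>"
    using z_fixed \<theta>(1) by (simp add: aut_divide aut_in)
  ultimately obtain w where "\<sigma> \<theta> / \<theta> = of_rat w" by (rule fixed_obtain_rat)
  with z_root have "of_rat (w^2 + w + 1) = (0 :: complex)" by (simp add: of_rat_add of_rat_power)
  then show False using square_add_self_add_one_neq_0[of w] by simp
qed

lemma depressed_cubic_of_trace_zero:
  assumes \<theta>: "\<theta> \<in> L" "\<sigma> \<theta> \<noteq> \<theta>" "\<theta> + \<sigma> \<theta> + \<sigma> (\<sigma> \<theta>) = 0"
  obtains p q d where "\<theta>^3 + of_rat p * \<theta> + of_rat q = 0" "p \<noteq> 0" "d \<noteq> 0"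
    "d^2 = -4*p^3 - 27*q^2"
proof -
  define \<theta>2 where "\<theta>2 = \<sigma> \<theta>"
  define \<theta>3 where "\<theta>3 = \<sigma> \<theta>2"
  have in_L: "\<theta>2 \<in> L" "\<theta>3 \<in> L" using \<theta>(1) by (simp_all add: \<theta>2_def \<theta>3_def aut_in)
  have cycle: "\<sigma> \<theta> = \<theta>2" "\<sigma> \<theta>2 = \<theta>3" "\<sigma> \<theta>3 = \<theta>"
    by (simp_all add: \<theta>2_def \<theta>3_def aut_aut_aut)
  have \<theta>3_eq: "\<theta>3 = - \<theta> - \<theta>2"
    using \<theta>(3) by (simp add: \<theta>2_def \<theta>3_def algebra_simps add_eq_0_iff)
  define P where "P = \<theta> * \<theta>2 + \<theta>2 * \<theta>3 + \<theta>3 * \<theta>"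
  define Q where "Q = - (\<theta> * \<theta>2 * \<theta>3)"
  define D where "D = (\<theta> - \<theta>2) * (\<theta>2 - \<theta>3) * (\<theta>3 - \<theta>)"
  have "P \<in> L" "\<sigma> P = P" using \<theta>(1) in_L
    by (simp_all add: P_def cycle aut_add aut_mult L_closed algebra_simps)
  then obtain p where p: "P = of_rat p" by (rule fixed_obtain_rat)
  have "Q \<in> L" "\<sigma> Q = Q" using \<theta>(1) in_L
    by (simp_all add: Q_def cycle aut_minus aut_mult L_closed algebra_simps)
  then obtain q where q: "Q = of_rat q" by (rule fixed_obtain_rat)
  have "D \<in> L" "\<sigma> D = D" using \<theta>(1) in_L
    by (simp_all add: D_def cycle aut_diff aut_mult L_closed mult_ac)
  then obtain d where d: "D = of_rat d" by (rule fixed_obtain_rat)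
  have "\<theta>^3 + P * \<theta> + Q = 0"
    unfolding P_def Q_def \<theta>3_eq by (simp add: algebra_simps power3_eq_cube)
  moreover have "P \<noteq> 0"
    using trace_zero_pair_sum_neq_0[OF \<theta>] by (simp add: P_def \<theta>2_def \<theta>3_def)
  moreover have "D \<noteq> 0"
    using moved_orbit_distinct[OF \<theta>(1,2)] \<theta>(2) by (simp add: D_def \<theta>2_def \<theta>3_def)
  moreover have "D^2 = -4*P^3 - 27*Q^2"
    unfolding P_def Q_def D_def \<theta>3_eq by (simp add: algebra_simps power3_eq_cube power2_eq_square)
  ultimately have "\<theta>^3 + of_rat p * \<theta> + of_rat q = 0" "p \<noteq> 0" "d \<noteq> 0"
    and "of_rat (d^2) = (of_rat (-4*p^3 - 27*q^2) :: complex)"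
    unfolding p q d by (simp_all add: of_rat_diff of_rat_mult of_rat_power of_rat_minus)
  then show ?thesis by (intro that[of p q d]) (simp_all only: of_rat_eq_iff not_False_eq_True)
qed

theorem splitting_field_of_some_g_poly: "\<exists>t. L = splitting_field_Q (g_poly t)"
proof -
  obtain \<theta> where \<theta>: "\<theta> \<in> L" "\<sigma> \<theta> \<noteq> \<theta>" "\<theta> + \<sigma> \<theta> + \<sigma> (\<sigma> \<theta>) = 0"
    by (rule trace_zero_moved_element)
  obtain p q d where cubic: "\<theta>^3 + of_rat p * \<theta> + of_rat q = 0" and "p \<noteq> 0" "d \<noteq> 0"
    and disc: "d^2 = -4*p^3 - 27*q^2"
    by (rule depressed_cubic_of_trace_zero[OF \<theta>])
  obtain v where "v \<noteq> 0" "81*p^2*v^2 = d^2" and nondeg: "-3*q/p - 13*v \<noteq> 0"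
    by (rule choose_nondegenerate_sqrt[OF \<open>p \<noteq> 0\<close> \<open>d \<noteq> 0\<close>])
  define la where "la = 14 / (-3*q/p - 13*v)"
  define t where "t = 7*la*v"
  define r where "r = of_rat (28*t*la) * \<theta> - of_rat (49*(t^2 + 13*t + 49))"
  have "la*(-3*q/p - 13*v) = 14" using nonzero_eq_divide_eq[OF nondeg, of la 14] la_def by blast
  then have "of_rat (81*p^2*v^2) = (of_rat (-4*p^3 - 27*q^2) :: complex)"
    "of_rat (la*(-3*q/p - 13*v)) = (of_rat 14 :: complex)"
    using disc \<open>81*p^2*v^2 = d^2\<close> by simp_all
  then have "g_cubic (of_rat t) r = 0"
    using g_cubic_vanishes[OF cubic, of "of_rat v" "of_rat la"] \<open>p \<noteq> 0\<close>
    by (simp add: t_def r_def of_rat_add of_rat_diff of_rat_mult of_rat_divide of_rat_power of_rat_minus)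
  moreover have "r \<in> L" using \<theta>(1) by (simp add: r_def L_closed)
  moreover have "\<sigma> r \<noteq> r"
  proof -
    have "28*t*la \<noteq> 0" using \<open>v \<noteq> 0\<close> nondeg by (simp add: t_def la_def)
    then show ?thesis using \<theta>(1,2) by (simp add: r_def aut_diff aut_mult aut_of_rat L_closed)
  qed
  ultimately show ?thesis
    using splitting_field_eq_if_moved_root[OF degree_g_poly] by (auto simp: poly_g_poly)
qed

end

theorem lemma4p9:
  fixes L :: "complex set"
  assumes "galois_over_Q L"
    and "Gal_C L \<cong> integer_mod_group 3"
  shows "\<exists>t :: rat. L = splitting_field_Q (g_poly t)"
proof -
  obtain \<sigma> where "card (Aut_C L) = 3" "\<sigma> \<in> Aut_C L" "\<sigma> \<noteq> id" "\<sigma> \<circ> \<sigma> \<circ> \<sigma> = id"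
    using Gal_C_iso_Z3_generator[OF assms(2)] .
  moreover from assms(1) have "subfield_C L" "Q_dim L (card (Aut_C L))"
    unfolding galois_over_Q_def by auto
  ultimately interpret cyclic_cubic L \<sigma> by unfold_locales simp_all
  show ?thesis by (rule splitting_field_of_some_g_poly)
qed

end
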